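(* For any $n,L\geq 1$ and any random $n\times n$ matrix $X$ with entries in $\mathbb{Z}$, $$\mathbb{P}\Bigl(\exists\, Q\in\textstyle\bigcup_{\ell=2}^{L}\mathbb{O}_n(\ell,\mathbb{Q}):\ Q^{T}XQ\in\mathbb{Z}^{n\times n}\Bigr)\leq\frac{1}{2^n n!}\sum_{\ell=2}^{L}\mathbb{E}[N_n(\ell)].$$
   Context: The level of a rational matrix $Q$ is the least integer $\ell\geq 1$ with $\ell Q$ having integer entries. $\mathbb{O}_n(\ell,\mathbb{Q})$ denotes the set of all rational orthogonal $n\times n$ matrices with level $\ell$. For $X\in\mathbb{Z}^{n\times n}$, $N_n(\ell)=\#\{Q\in\mathbb{O}_n(\ell,\mathbb{Q}): Q^{T}XQ\in\mathbb{Z}^{n\times n}\}$. *)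

theory Defs
  imports "HOL-Analysis.Analysis" "HOL-Probability.Probability"
begin

definition int_to_rat_mat :: "int^'n^'n \<Rightarrow> rat^'n^'n" where
  "int_to_rat_mat X = (\<chi> i j. of_int (X $ i $ j))"

definition is_integral_mat :: "rat^'n^'n \<Rightarrow> bool" where
  "is_integral_mat A \<longleftrightarrow> (\<forall>i j. A $ i $ j \<in> \<int>)"

definition rat_orthogonal :: "rat^'n^'n \<Rightarrow> bool" where
  "rat_orthogonal Q \<longleftrightarrow> transpose Q ** Q = mat 1"

definition mat_level :: "rat^'n^'n \<Rightarrow> nat" where
  "mat_level Q = (LEAST l. l \<ge> 1 \<and> is_integral_mat (\<chi> i j. of_nat l * Q $ i $ j))"

definition O_level :: "nat \<Rightarrow> (rat^'n^'n) set" where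
  "O_level l = {Q. rat_orthogonal Q \<and> mat_level Q = l}"

definition N_count :: "int^'n^'n \<Rightarrow> nat \<Rightarrow> nat" where
  "N_count X l = card {Q \<in> O_level l.
      is_integral_mat (transpose Q ** int_to_rat_mat X ** Q)}"

end

theory Submission
  imports Defs
begin

text \<open>Signed permutation matrices are integral and orthogonal, so right multiplication by them
  preserves orthogonality, the level and the integrality of \<open>Q\<^sup>T X Q\<close>; since \<open>Q\<close> is invertible
  this action is free. Hence \<open>N\<^sub>n(\<ell>)\<close> is either \<open>0\<close> or at least \<open>2\<^sup>n n!\<close>, so the indicator of
  the event is bounded by \<open>(\<Sum>\<ell> N\<^sub>n(\<ell>)) / (2\<^sup>n n!)\<close>, and Markov's inequality gives the bound.\<close>

lemma finite_vec_components_in: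
  assumes "finite S"
  shows "finite {v :: 'a^'n. \<forall>i. v $ i \<in> S}"
proof (rule finite_subset)
  show "{v :: 'a^'n. \<forall>i. v $ i \<in> S} \<subseteq> vec_lambda ` (UNIV \<rightarrow>\<^sub>E S)"
  proof
    fix v :: "'a^'n" assume "v \<in> {v. \<forall>i. v $ i \<in> S}"
    then have "vec_nth v \<in> UNIV \<rightarrow>\<^sub>E S" by auto
    then show "v \<in> vec_lambda ` (UNIV \<rightarrow>\<^sub>E S)" by (metis image_eqI vec_nth_inverse)
  qed
  show "finite (vec_lambda ` (UNIV \<rightarrow>\<^sub>E S))"
    using assms by (intro finite_imageI finite_PiE) auto
qed

lemma is_integral_mat_mult:
  assumes "is_integral_mat A" "is_integral_mat B"
  shows "is_integral_mat (A ** B)"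
  using assms by (auto simp: is_integral_mat_def matrix_matrix_mult_def intro: Ints_mult)

lemma is_integral_mat_transpose [simp]:
  "is_integral_mat (transpose A) \<longleftrightarrow> is_integral_mat A"
  by (auto simp: is_integral_mat_def transpose_def)

lemma rat_orthogonal_mult:
  assumes "rat_orthogonal Q" "rat_orthogonal P"
  shows "rat_orthogonal (Q ** P)"
proof -
  have "transpose (Q ** P) ** (Q ** P) = transpose P ** (transpose Q ** Q) ** P"
    by (simp add: matrix_transpose_mul matrix_mul_assoc)
  with assms show ?thesis by (simp add: rat_orthogonal_def)
qed

lemma rat_orthogonal_entry_abs_le_1:
  assumes "rat_orthogonal Q"
  shows "\<bar>Q $ i $ j\<bar> \<le> 1"
proof -
  have "(Q $ i $ j)\<^sup>2 \<le> (\<Sum>k\<in>UNIV. (Q $ k $ j)\<^sup>2)"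
    by (rule member_le_sum) auto
  also have "\<dots> = (transpose Q ** Q) $ j $ j"
    by (simp add: matrix_matrix_mult_def transpose_def power2_eq_square)
  also have "\<dots> = 1"
    using assms by (simp add: rat_orthogonal_def mat_def)
  finally show ?thesis by (simp add: abs_square_le_1)
qed

lemma ex_nat_mult_rat_in_Ints: "\<exists>d::nat. d > 0 \<and> of_nat d * q \<in> (\<int>::rat set)"
proof -
  obtain a b where "quotient_of q = (a, b)" by fastforce
  then have "b > 0" "q = of_int a / of_int b"
    by (simp_all add: quotient_of_denom_pos quotient_of_div)
  then show ?thesis by (intro exI[of _ "nat b"]) auto
qed

lemma ex_integral_multiple:
  fixes Q :: "rat^'n^'n"
  shows "\<exists>l\<ge>1. is_integral_mat (\<chi> i j. of_nat l * Q $ i $ j)"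
proof -
  define d where "d i j = (SOME d::nat. d > 0 \<and> of_nat d * Q $ i $ j \<in> (\<int>::rat set))" for i j
  have d: "d i j > 0 \<and> of_nat (d i j) * Q $ i $ j \<in> \<int>" for i j
    unfolding d_def by (rule someI_ex) (rule ex_nat_mult_rat_in_Ints)
  define D where "D = (\<Prod>(i, j)\<in>UNIV. d i j)"
  have "of_nat D * Q $ i $ j \<in> (\<int>::rat set)" for i j
  proof -
    have "d i j dvd D" unfolding D_def using dvd_prodI[of UNIV "(i, j)" "\<lambda>(i, j). d i j"] by simp
    then obtain k where "D = d i j * k" by blast
    then have "of_nat D * Q $ i $ j = of_nat k * (of_nat (d i j) * Q $ i $ j)" by simp
    then show ?thesis using d[of i j] by (metis Ints_mult Ints_of_nat)
  qed
  moreover have "D \<ge> 1" unfolding D_def using d by (simp add: Suc_le_eq prod_pos split_beta)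
  ultimately show ?thesis by (auto simp: is_integral_mat_def)
qed

lemma mat_level_ge_1: "mat_level Q \<ge> 1"
  unfolding mat_level_def by (rule LeastI2_ex[OF ex_integral_multiple]) auto

lemma is_integral_mat_mat_level_multiple:
  "is_integral_mat (\<chi> i j. of_nat (mat_level Q) * Q $ i $ j)"
  unfolding mat_level_def by (rule LeastI2_ex[OF ex_integral_multiple]) auto

lemma finite_O_level: "finite (O_level l :: (rat^'n^'n) set)"
proof -
  define S :: "rat set" where "S = (\<lambda>k. of_int k / of_nat l) ` {-int l..int l}"
  have "O_level l \<subseteq> {Q :: rat^'n^'n. \<forall>i. Q $ i \<in> {v. \<forall>j. v $ j \<in> S}}"
  proof clarify
    fix Q :: "rat^'n^'n" and i j
    assume "Q \<in> O_level l"
    then have orth: "rat_orthogonal Q" and l: "mat_level Q = l" by (auto simp: O_level_def)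
    obtain k where k: "of_nat l * Q $ i $ j = of_int k"
      using is_integral_mat_mat_level_multiple[of Q] l by (auto simp: is_integral_mat_def elim!: Ints_cases)
    have "\<bar>of_int k\<bar> \<le> (of_nat l :: rat)"
      using k rat_orthogonal_entry_abs_le_1[OF orth, of i j]
      by (metis abs_mult abs_of_nat mult_left_le of_nat_0_le_iff)
    then have "\<bar>k\<bar> \<le> int l"
      by (metis of_int_abs of_int_le_iff of_int_of_nat_eq)
    then have "k \<in> {-int l..int l}" by auto
    moreover have "Q $ i $ j = of_int k / of_nat l"
      using k mat_level_ge_1[of Q] l by (simp add: field_simps)
    ultimately show "Q $ i $ j \<in> S" unfolding S_def by blast
  qed
  moreover have "finite {Q :: rat^'n^'n. \<forall>i. Q $ i \<in> {v. \<forall>j. v $ j \<in> S}}"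
    unfolding S_def by (intro finite_vec_components_in) auto
  ultimately show ?thesis by (rule finite_subset)
qed

lemma is_integral_mat_scaled_mult_iff:
  assumes "is_integral_mat P" "is_integral_mat P'" "P ** P' = mat 1"
  shows "is_integral_mat (\<chi> i j. c * (Q ** P) $ i $ j) \<longleftrightarrow> is_integral_mat (\<chi> i j. c * Q $ i $ j)"
proof -
  have scaled_mult: "(\<chi> i j. c * (A ** B) $ i $ j) = (\<chi> i j. c * A $ i $ j) ** B" for A B :: "rat^'n^'n"
    by (simp add: vec_eq_iff matrix_matrix_mult_def sum_distrib_left mult.assoc)
  have "Q = (Q ** P) ** P'"
    using assms(3) by (simp add: matrix_mul_assoc[symmetric])
  then show ?thesis
    using assms(1,2) by (metis scaled_mult is_integral_mat_mult)
qed

lemma mat_level_mult_unimodular: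
  assumes "is_integral_mat P" "is_integral_mat P'" "P ** P' = mat 1"
  shows "mat_level (Q ** P) = mat_level Q"
  unfolding mat_level_def using is_integral_mat_scaled_mult_iff[OF assms] by simp

definition signed_perm_mat :: "('n \<Rightarrow> 'n) \<Rightarrow> 'n set \<Rightarrow> 'a::ring_1^'n^'n" where
  "signed_perm_mat \<sigma> S = (\<chi> i j. if i = \<sigma> j then (if j \<in> S then -1 else 1) else 0)"

definition signed_perm_mats :: "('a::ring_1^'n^'n) set" where
  "signed_perm_mats = (\<lambda>(\<sigma>, S). signed_perm_mat \<sigma> S) ` ({\<sigma>. \<sigma> permutes UNIV} \<times> UNIV)"

lemma matrix_mul_signed_perm_mat:
  "A ** signed_perm_mat \<sigma> S = (\<chi> i j. if j \<in> S then - A $ i $ \<sigma> j else A $ i $ \<sigma> j)"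
  by (simp add: vec_eq_iff matrix_matrix_mult_def signed_perm_mat_def if_distrib[of "(*) _"] cong: if_cong)

lemma transpose_signed_perm_mat_mult_self:
  assumes "\<sigma> permutes UNIV"
  shows "transpose (signed_perm_mat \<sigma> S) ** signed_perm_mat \<sigma> S = (mat 1 :: 'a::ring_1^'n^'n)"
proof -
  have "\<sigma> i = \<sigma> j \<longleftrightarrow> i = j" for i j
    using assms by (metis permutes_inj injD)
  then show ?thesis
    unfolding matrix_mul_signed_perm_mat
    by (auto simp: vec_eq_iff signed_perm_mat_def transpose_def mat_def)
qed

lemma signed_perm_mat_inject:
  assumes "signed_perm_mat \<sigma> S = (signed_perm_mat \<tau> T :: 'a::{ring_1,ring_char_0}^'n^'n)"
  shows "\<sigma> = \<tau> \<and> S = T"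
proof -
  have "\<sigma> j = \<tau> j \<and> (j \<in> S \<longleftrightarrow> j \<in> T)" for j
    using arg_cong[OF assms, of "\<lambda>P. P $ \<sigma> j $ j"]
    by (auto simp: signed_perm_mat_def split: if_splits)
  then show ?thesis by auto
qed

lemma card_signed_perm_mats:
  "card (signed_perm_mats :: ('a::{ring_1,ring_char_0}^'n^'n) set) = 2 ^ CARD('n) * fact CARD('n)"
proof -
  have "inj_on (\<lambda>(\<sigma>, S). signed_perm_mat \<sigma> S :: 'a^'n^'n) ({\<sigma>. \<sigma> permutes UNIV} \<times> UNIV)"
    by (auto intro!: inj_onI dest: signed_perm_mat_inject)
  then have "card (signed_perm_mats :: ('a^'n^'n) set)
      = card {\<sigma>. \<sigma> permutes (UNIV :: 'n set)} * card (UNIV :: 'n set set)"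
    by (simp add: signed_perm_mats_def card_image card_cartesian_product)
  also have "\<dots> = fact CARD('n) * 2 ^ CARD('n)"
    by (simp add: card_permutations card_Pow flip: Pow_UNIV)
  finally show ?thesis by simp
qed

lemma signed_perm_mats_rat_orthogonal:
  "P \<in> signed_perm_mats \<Longrightarrow> rat_orthogonal P"
  by (auto simp: signed_perm_mats_def rat_orthogonal_def transpose_signed_perm_mat_mult_self)

lemma signed_perm_mats_integral:
  "P \<in> signed_perm_mats \<Longrightarrow> is_integral_mat (P :: rat^'n^'n)"
  by (auto simp: signed_perm_mats_def signed_perm_mat_def is_integral_mat_def)

lemma O_level_mult_integral_orthogonal:
  assumes "Q \<in> O_level l" "rat_orthogonal P" "is_integral_mat P"
  shows "Q ** P \<in> O_level l"
proof -
  have "P ** transpose P = mat 1"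
    using assms(2) by (simp add: rat_orthogonal_def matrix_left_right_inverse)
  then have "mat_level (Q ** P) = mat_level Q"
    using assms(3) by (intro mat_level_mult_unimodular) auto
  with assms show ?thesis
    by (simp add: O_level_def rat_orthogonal_mult)
qed

lemma is_integral_mat_congruence_mult:
  assumes "is_integral_mat (transpose Q ** A ** Q)" "is_integral_mat P"
  shows "is_integral_mat (transpose (Q ** P) ** A ** (Q ** P))"
proof -
  have "transpose (Q ** P) ** A ** (Q ** P) = transpose P ** (transpose Q ** A ** Q) ** P"
    by (simp add: matrix_transpose_mul matrix_mul_assoc)
  with assms show ?thesis by (simp add: is_integral_mat_mult)
qed

lemma N_count_ge_if_nonempty:
  assumes "Q \<in> O_level l" "is_integral_mat (transpose Q ** int_to_rat_mat X ** Q)"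
  shows "2 ^ CARD('n) * fact CARD('n) \<le> N_count (X :: int^'n^'n) l"
proof -
  have image_sub: "(\<lambda>P. Q ** P) ` signed_perm_mats
      \<subseteq> {Q \<in> O_level l. is_integral_mat (transpose Q ** int_to_rat_mat X ** Q)}"
    using assms signed_perm_mats_rat_orthogonal signed_perm_mats_integral
    by (auto intro: O_level_mult_integral_orthogonal is_integral_mat_congruence_mult)
  have "inj_on (\<lambda>P. Q ** P) signed_perm_mats"
  proof (rule inj_onI)
    fix P P' :: "rat^'n^'n" assume "Q ** P = Q ** P'"
    then have "(transpose Q ** Q) ** P = (transpose Q ** Q) ** P'"
      by (simp add: matrix_mul_assoc[symmetric])
    then show "P = P'"
      using assms(1) by (simp add: O_level_def rat_orthogonal_def)
  qed
  then have "card (signed_perm_mats :: (rat^'n^'n) set) = card ((\<lambda>P. Q ** P) ` signed_perm_mats)"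
    by (simp add: card_image)
  also have "\<dots> \<le> N_count X l"
    unfolding N_count_def by (rule card_mono[OF _ image_sub]) (simp add: finite_O_level)
  finally show ?thesis by (simp add: card_signed_perm_mats)
qed

lemma sum_N_count_ge_if_nonempty:
  assumes "finite I" "l \<in> I" "Q \<in> O_level l"
    and "is_integral_mat (transpose Q ** int_to_rat_mat X ** Q)"
  shows "2 ^ CARD('n) * fact CARD('n) \<le> (\<Sum>l\<in>I. real (N_count (X :: int^'n^'n) l))"
proof -
  have "real (2 ^ CARD('n) * fact CARD('n)) \<le> real (N_count X l)"
    using N_count_ge_if_nonempty[OF assms(3,4)] by (simp only: of_nat_le_iff)
  also have "\<dots> \<le> (\<Sum>l\<in>I. real (N_count X l))"
    using assms(1,2) by (intro member_le_sum) auto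
  finally show ?thesis by simp
qed

lemma integrable_N_count:
  fixes p :: "(int^'n^'n) pmf"
  shows "integrable (measure_pmf p) (\<lambda>X. real (N_count X l))"
proof (rule measure_pmf.integrable_const_bound)
  have "N_count X l \<le> card (O_level l :: (rat^'n^'n) set)" for X :: "int^'n^'n"
    unfolding N_count_def by (rule card_mono[OF finite_O_level]) auto
  then show "AE X in measure_pmf p. norm (real (N_count X l)) \<le> card (O_level l :: (rat^'n^'n) set)"
    by simp
qed simp

lemma measure_pmf_prob_le_expectation_div:
  fixes f :: "'a \<Rightarrow> real"
  assumes "integrable (measure_pmf p) f" "\<And>x. 0 \<le> f x" "c > 0" "\<And>x. x \<in> E \<Longrightarrow> c \<le> f x"
  shows "measure_pmf.prob p E \<le> measure_pmf.expectation p f / c"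
proof -
  have "measure_pmf.prob p E \<le> measure_pmf.prob p {x. c \<le> f x}"
    using assms(4) by (intro measure_pmf.finite_measure_mono) auto
  also have "\<dots> \<le> measure_pmf.expectation p f / c"
    using integral_Markov_inequality_measure[OF assms(1), of UNIV c] assms(2,3) by simp
  finally show ?thesis .
qed

theorem lemma3p6:
  fixes p :: "(int^'n^'n) pmf" and L :: nat
  assumes "L \<ge> 1"
  shows "measure_pmf.prob p {X. \<exists>l\<in>{2..L}. \<exists>Q\<in>O_level l.
            is_integral_mat (transpose Q ** int_to_rat_mat X ** Q)}
         \<le> 1 / (2 ^ CARD('n) * fact (CARD('n)))
            * (\<Sum>l=2..L. measure_pmf.expectation p (\<lambda>X. real (N_count X l)))"
proof -
  define N where "N X = (\<Sum>l=2..L. real (N_count X l))" for X :: "int^'n^'n"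
  have "measure_pmf.prob p {X. \<exists>l\<in>{2..L}. \<exists>Q\<in>O_level l.
            is_integral_mat (transpose Q ** int_to_rat_mat X ** Q)}
        \<le> measure_pmf.expectation p N / (2 ^ CARD('n) * fact CARD('n))"
  proof (rule measure_pmf_prob_le_expectation_div)
    show "integrable (measure_pmf p) N"
      unfolding N_def by (rule Bochner_Integration.integrable_sum, rule integrable_N_count)
    fix X
    show "0 \<le> N X" unfolding N_def by (simp add: sum_nonneg)
    assume "X \<in> {X. \<exists>l\<in>{2..L}. \<exists>Q\<in>O_level l.
              is_integral_mat (transpose Q ** int_to_rat_mat X ** Q)}"
    then show "2 ^ CARD('n) * fact CARD('n) \<le> N X"
      unfolding N_def by (auto intro: sum_N_count_ge_if_nonempty)
  qed simp
  also have "measure_pmf.expectation p N = (\<Sum>l=2..L. measure_pmf.expectation p (\<lambda>X. real (N_count X l)))"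
    unfolding N_def by (intro Bochner_Integration.integral_sum integrable_N_count)
  finally show ?thesis by simp
qed

end
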